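(* Let $k\in\mathbb{Z}$. For every integer $n\ge 1$, $$2\sum_{m=1}^{n}\frac{1}{m^{k-1}}S_{1}(n,m)=G_{n}^{(k)}(1)+G_{n}^{(k)}.$$
   Context: For $k\in\mathbb{Z}$, the polyexponential function of index $k$ is $\mathrm{Ei}_k(x)=\sum_{n=1}^{\infty}\frac{x^n}{n^k(n-1)!}$. The poly-Genocchi polynomials $G_n^{(k)}(x)$ of index $k$ are defined by the generating function $\frac{2\,\mathrm{Ei}_k(\log(1+t))}{e^t+1}e^{xt}=\sum_{n=0}^{\infty}G_n^{(k)}(x)\frac{t^n}{n!}$, and $G_n^{(k)}=G_n^{(k)}(0)$. $S_1(n,m)$ denotes the (signed) Stirling numbers of the first kind, defined by $\frac{(\log(1+t))^m}{m!}=\sum_{n=m}^{\infty}S_1(n,m)\frac{t^n}{n!}$ (equivalently $x(x-1)\cdots(x-n+1)=\sum_{m=0}^{n}S_1(n,m)x^m$). *)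

theory Defs
  imports "HOL-Computational_Algebra.Formal_Power_Series" "HOL-Combinatorics.Stirling"
begin

definition polyexp_fps :: "int \<Rightarrow> real fps" where
  "polyexp_fps k = Abs_fps (\<lambda>n. if n = 0 then 0
      else 1 / ((real n) powi k * fact (n - 1)))"

definition poly_genocchi_gf :: "int \<Rightarrow> real \<Rightarrow> real fps" where
  "poly_genocchi_gf k x =
     fps_const 2 * (polyexp_fps k oo fps_ln 1) / (fps_exp 1 + 1) * fps_exp x"

definition poly_genocchi_poly :: "int \<Rightarrow> nat \<Rightarrow> real \<Rightarrow> real" where
  "poly_genocchi_poly k n x = fact n * fps_nth (poly_genocchi_gf k x) n"

definition poly_genocchi :: "int \<Rightarrow> nat \<Rightarrow> real" where
  "poly_genocchi k n = poly_genocchi_poly k n 0"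

text \<open>Signed Stirling numbers of the first kind; the library's stirling is unsigned.\<close>
definition Stirling1 :: "nat \<Rightarrow> nat \<Rightarrow> int" where
  "Stirling1 n m = (-1) ^ (n - m) * int (stirling n m)"

end

theory Submission
  imports Defs
begin

text \<open>Adding the generating functions at \<open>x = 1\<close> and \<open>x = 0\<close> multiplies the numerator by
  \<open>e\<^sup>t + 1\<close>, which cancels the denominator: the sum is \<open>2 Ei\<^sub>k(log(1 + t))\<close>. Since
  \<open>log(1 + t)\<^sup>m / m!\<close> is the exponential generating function of \<open>S\<^sub>1(n, m)\<close>, the
  \<open>n\<close>-th exponential coefficient of \<open>Ei\<^sub>k(log(1 + t))\<close> is
  \<open>\<Sum>\<^sub>m m! [t\<^sup>m] Ei\<^sub>k(t) S\<^sub>1(n, m) = \<Sum>\<^sub>m S\<^sub>1(n, m) / m\<^sup>k\<^sup>-\<^sup>1\<close>.\<close>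

unbundle fps_syntax

lemma Stirling1_0_left: "Stirling1 0 m = (if m = 0 then 1 else 0)"
  by (cases m) (simp_all add: Stirling1_def)

lemma Stirling1_Suc_0 [simp]: "Stirling1 (Suc n) 0 = 0"
  by (simp add: Stirling1_def)

lemma Stirling1_Suc_Suc:
  "Stirling1 (Suc n) (Suc m) = Stirling1 n m - int n * Stirling1 n (Suc m)"
proof (cases "m < n")
  case True
  then have "n - m = Suc (n - Suc m)" by simp
  then show ?thesis by (simp add: Stirling1_def algebra_simps)
next
  case False
  then consider "m = n" | "n < m" by linarith
  then show ?thesis by cases (simp_all add: Stirling1_def)
qed

lemma fps_ln_power_deriv:
  "(1 + fps_X) * fps_deriv (fps_ln 1 ^ Suc m) = of_nat (Suc m) * (fps_ln 1 :: 'a::field_char_0 fps) ^ m"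
proof -
  have "fps_deriv (fps_ln 1 ^ Suc m) = of_nat (Suc m) * inverse (1 + fps_X) * (fps_ln 1 :: 'a fps) ^ m"
    by (simp only: fps_deriv_power' diff_Suc_1) (simp add: fps_ln_deriv)
  moreover have "(1 + fps_X) * inverse (1 + fps_X :: 'a fps) = 1"
    by (rule inverse_mult_eq_1') simp
  ultimately show ?thesis
    by (metis (no_types, lifting) mult.assoc mult.left_commute mult.right_neutral)
qed

lemma fps_ln_power_nth_Suc_Suc:
  fixes L :: "'a::field_char_0 fps"
  defines "L \<equiv> fps_ln 1"
  shows "of_nat (Suc n) * (L ^ Suc m) $ Suc n
           = of_nat (Suc m) * (L ^ m) $ n - of_nat n * (L ^ Suc m) $ n"
proof -
  have "((1 + fps_X) * fps_deriv (L ^ Suc m)) $ n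
          = of_nat (Suc n) * (L ^ Suc m) $ Suc n + of_nat n * (L ^ Suc m) $ n"
    by (cases n) (simp_all add: fps_mult_fps_X_plus_1_nth algebra_simps del: power_Suc)
  moreover have "((1 + fps_X) * fps_deriv (L ^ Suc m)) $ n = of_nat (Suc m) * (L ^ m) $ n"
    unfolding L_def fps_ln_power_deriv by (metis fps_mult_left_const_nth fps_of_nat)
  ultimately show ?thesis by (simp add: algebra_simps)
qed

lemma fps_ln_power_nth:
  "fact n * (fps_ln 1 ^ m :: 'a::field_char_0 fps) $ n = fact m * of_int (Stirling1 n m)"
proof (induction n arbitrary: m)
  case 0
  then show ?case by (cases m) (simp_all add: fps_power_zeroth Stirling1_0_left)
next
  case (Suc n)
  show ?case
  proof (cases m)
    case 0
    then show ?thesis by simp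
  next
    case (Suc j)
    let ?L = "fps_ln 1 :: 'a fps"
    have "fact (Suc n) * (?L ^ Suc j) $ Suc n = fact n * (of_nat (Suc n) * (?L ^ Suc j) $ Suc n)"
      by (simp add: algebra_simps)
    also have "\<dots> = of_nat (Suc j) * (fact n * (?L ^ j) $ n)
                     - of_nat n * (fact n * (?L ^ Suc j) $ n)"
      by (simp only: fps_ln_power_nth_Suc_Suc) (simp add: algebra_simps)
    also have "\<dots> = of_nat (Suc j) * (fact j * of_int (Stirling1 n j))
                     - of_nat n * (fact (Suc j) * of_int (Stirling1 n (Suc j)))"
      by (simp only: Suc.IH)
    also have "\<dots> = fact (Suc j) * of_int (Stirling1 (Suc n) (Suc j))"
      by (simp add: Stirling1_Suc_Suc algebra_simps)
    finally show ?thesis using Suc by simp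
  qed
qed

lemma fps_compose_fps_ln_nth:
  fixes f :: "'a::field_char_0 fps"
  shows "fact n * (f oo fps_ln 1) $ n = (\<Sum>m=0..n. fact m * f $ m * of_int (Stirling1 n m))"
  unfolding fps_compose_nth sum_distrib_left
  by (intro sum.cong refl) (metis fps_ln_power_nth mult.left_commute mult.assoc)

lemma fact_mult_polyexp_fps_nth:
  assumes "m > 0"
  shows "fact m * polyexp_fps k $ m = 1 / real m powi (k - 1)"
proof -
  have "real m powi k = real m powi (k - 1) * real m"
    using power_int_minus_mult[of "real m" k] assms by simp
  moreover have "fact m = real m * fact (m - 1)"
    using assms by (simp add: fact_reduce)
  ultimately show ?thesis
    using assms by (simp add: polyexp_fps_def)
qed

lemma poly_genocchi_gf_1_plus_0:
  "poly_genocchi_gf k 1 + poly_genocchi_gf k 0 = fps_const 2 * (polyexp_fps k oo fps_ln 1)"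
proof -
  define C where "C = fps_const 2 * (polyexp_fps k oo fps_ln 1)"
  define B :: "real fps" where "B = fps_exp 1 + 1"
  have "poly_genocchi_gf k 1 + poly_genocchi_gf k 0 = C * inverse B * B"
    unfolding poly_genocchi_gf_def C_def B_def by (simp add: fps_divide_unit algebra_simps)
  also have "\<dots> = C"
    using inverse_mult_eq_1[of B] by (simp add: B_def mult.assoc)
  finally show ?thesis unfolding C_def .
qed

theorem theorem1:
  fixes k :: int and n :: nat
  assumes "n \<ge> 1"
  shows "2 * (\<Sum>m=1..n. real_of_int (Stirling1 n m) / (real m) powi (k - 1))
           = poly_genocchi_poly k n 1 + poly_genocchi k n"
proof -
  have "poly_genocchi_poly k n 1 + poly_genocchi k n
          = 2 * (fact n * (polyexp_fps k oo fps_ln 1) $ n)"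
    using arg_cong[OF poly_genocchi_gf_1_plus_0, of "\<lambda>f. fact n * f $ n"]
    by (simp add: poly_genocchi_def poly_genocchi_poly_def algebra_simps)
  also have "fact n * (polyexp_fps k oo fps_ln 1) $ n
               = (\<Sum>m=1..n. fact m * polyexp_fps k $ m * of_int (Stirling1 n m))"
    unfolding fps_compose_fps_ln_nth
    by (rule sum.mono_neutral_right) (auto simp: polyexp_fps_def)
  also have "\<dots> = (\<Sum>m=1..n. real_of_int (Stirling1 n m) / (real m) powi (k - 1))"
    by (intro sum.cong refl) (simp add: fact_mult_polyexp_fps_nth)
  finally show ?thesis by simp
qed

end
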